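(* For any central, essential real hyperplane arrangement $\mathcal{A}$, the graph $G_1$ has diameter exactly $|L_1|$ (the number of hyperplanes). For any choice of base chamber $c_0$ of $\mathcal{A}$, the graph $G_2$ has diameter at least $|L_2|$.
   Context: A central, essential arrangement $\mathcal{A}$ is a finite set of linear hyperplanes in $\mathbb{R}^d$ with common intersection $\{0\}$; $L_i$ is the set of codimension-$i$ subspaces obtained as intersections of hyperplanes of $\mathcal{A}$, so $L_1=\mathcal{A}$. Chambers are connected components of the complement of the union of hyperplanes; $L_1(c,c')$ is the set of hyperplanes separating chambers $c,c'$. $G_1$ is the graph on chambers with $c,c'$ adjacent iff $|L_1(c,c')|=1$. A minimal gallery is a shortest path in $G_1$; one from $c_0$ to $-c_0$ crosses every hyperplane exactly once. For minimal galleries $r,r'$ from $c_0$ to $-c_0$, $L_2(r,r')$ is the set of $X\in L_2$ such that $r,r'$ cross the hyperplanes containing $X$ in different orders. $G_2$ is the graph whose vertices are the minimal galleries from $c_0$ to $-c_0$, with $r,r'$ adjacent iff $|L_2(r,r')|=1$. *)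

theory Defs
  imports "HOL-Analysis.Analysis" "HOL-Library.Extended_Nat"
begin

definition is_walk :: "'v set \<Rightarrow> ('v \<Rightarrow> 'v \<Rightarrow> bool) \<Rightarrow> 'v list \<Rightarrow> bool" where
  "is_walk V E p \<longleftrightarrow> p \<noteq> [] \<and> set p \<subseteq> V \<and>
     (\<forall>i. Suc i < length p \<longrightarrow> E (p ! i) (p ! Suc i))"

text \<open>Graph distance (number of edges of a shortest walk), infinite if no walk exists.\<close>
definition gdist :: "'v set \<Rightarrow> ('v \<Rightarrow> 'v \<Rightarrow> bool) \<Rightarrow> 'v \<Rightarrow> 'v \<Rightarrow> enat" where
  "gdist V E u v = (INF p \<in> {p. is_walk V E p \<and> hd p = u \<and> last p = v}. enat (length p - 1))"

definition gdiameter :: "'v set \<Rightarrow> ('v \<Rightarrow> 'v \<Rightarrow> bool) \<Rightarrow> enat" where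
  "gdiameter V E = (SUP u \<in> V. SUP v \<in> V. gdist V E u v)"

definition linear_hyperplane :: "'a::euclidean_space set \<Rightarrow> bool" where
  "linear_hyperplane H \<longleftrightarrow> (\<exists>a. a \<noteq> 0 \<and> H = {x. a \<bullet> x = 0})"

definition central_essential_arrangement :: "'a::euclidean_space set set \<Rightarrow> bool" where
  "central_essential_arrangement A \<longleftrightarrow>
     finite A \<and> (\<forall>H\<in>A. linear_hyperplane H) \<and> \<Inter>A = {0}"

definition chambers :: "'a::euclidean_space set set \<Rightarrow> 'a set set" where
  "chambers A = components (- \<Union>A)"

definition Lcodim :: "'a::euclidean_space set set \<Rightarrow> nat \<Rightarrow> 'a set set" where
  "Lcodim A i = {X. \<exists>S. S \<subseteq> A \<and> S \<noteq> {} \<and> X = \<Inter>S \<and> dim X + i = DIM('a)}"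

definition separates :: "'a::euclidean_space set \<Rightarrow> 'a set \<Rightarrow> 'a set \<Rightarrow> bool" where
  "separates H c c' \<longleftrightarrow>
     (\<exists>a. a \<noteq> 0 \<and> H = {x. a \<bullet> x = 0} \<and> (\<exists>x\<in>c. \<exists>y\<in>c'. (a \<bullet> x) * (a \<bullet> y) < 0))"

definition L1sep :: "'a::euclidean_space set set \<Rightarrow> 'a set \<Rightarrow> 'a set \<Rightarrow> 'a set set" where
  "L1sep A c c' = {H \<in> A. separates H c c'}"

definition adj1 :: "'a::euclidean_space set set \<Rightarrow> 'a set \<Rightarrow> 'a set \<Rightarrow> bool" where
  "adj1 A c c' \<longleftrightarrow> card (L1sep A c c') = 1"

definition min_galleries :: "'a::euclidean_space set set \<Rightarrow> 'a set \<Rightarrow> 'a set list set" where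
  "min_galleries A c0 = {r. is_walk (chambers A) (adj1 A) r \<and> hd r = c0 \<and> last r = uminus ` c0 \<and>
      enat (length r - 1) = gdist (chambers A) (adj1 A) c0 (uminus ` c0)}"

definition crossings :: "'a::euclidean_space set set \<Rightarrow> 'a set list \<Rightarrow> 'a set list" where
  "crossings A r = map (\<lambda>i. THE H. L1sep A (r ! i) (r ! Suc i) = {H}) [0..<length r - 1]"

text \<open>L_2(r,r'): codimension-2 flats X such that r, r' cross the hyperplanes containing X
  in different orders.\<close>
definition L2sep :: "'a::euclidean_space set set \<Rightarrow> 'a set list \<Rightarrow> 'a set list \<Rightarrow> 'a set set" where
  "L2sep A r r' = {X \<in> Lcodim A 2.
      filter (\<lambda>H. X \<subseteq> H) (crossings A r) \<noteq> filter (\<lambda>H. X \<subseteq> H) (crossings A r')}"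

definition adj2 :: "'a::euclidean_space set set \<Rightarrow> 'a set list \<Rightarrow> 'a set list \<Rightarrow> bool" where
  "adj2 A r r' \<longleftrightarrow> card (L2sep A r r') = 1"

end

theory Submission
  imports Defs
begin

text \<open>
  Every chamber c is a cell of sign vectors, and the hyperplanes separating two chambers are
  exactly those on which their sign vectors differ. Since each step of a gallery changes the
  sign vector in one coordinate, the distance in G_1 is at least the number of separating
  hyperplanes; conversely, walking along a generic segment between two points crosses the
  separating hyperplanes one at a time, so the bound is attained. Hence the distance between c
  and -c is |A|, and no two chambers are further apart.

  A minimal gallery r from c_0 to -c_0 crosses every hyperplane exactly once; the antipodal
  gallery (apply x \<mapsto> -x and reverse) is again minimal and crosses the hyperplanes in the
  reversed order. Every X in L_2 lies in at least two hyperplanes, so the two galleries order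
  them differently and L_2(r,r') = L_2. Since L_2(\<cdot>,\<cdot>) satisfies the triangle inequality
  and grows by at most one along an edge of G_2, the distance from r to r' is at least |L_2|.
\<close>

lemma is_walk_Cons:
  "is_walk V E (a # p) \<longleftrightarrow> a \<in> V \<and> (p = [] \<or> is_walk V E p \<and> E a (hd p))"
proof (cases p)
  case (Cons b q)
  have "(\<forall>i. Suc i < length (a # p) \<longrightarrow> E ((a # p) ! i) ((a # p) ! Suc i)) \<longleftrightarrow>
        (\<forall>i < Suc (length q). E ((a # p) ! i) ((a # p) ! Suc i))"
    using Cons by auto
  also have "\<dots> \<longleftrightarrow> E a b \<and> (\<forall>i. Suc i < length p \<longrightarrow> E (p ! i) (p ! Suc i))"
    unfolding All_less_Suc2 using Cons by auto
  finally show ?thesis using Cons by (auto simp: is_walk_def)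
qed (simp add: is_walk_def)

lemma is_walk_nth:
  "is_walk V E r \<Longrightarrow> Suc i < length r \<Longrightarrow> E (r ! i) (r ! Suc i) \<and> r ! i \<in> V \<and> r ! Suc i \<in> V"
  unfolding is_walk_def by (auto dest: nth_mem)

lemma gdist_le_walk_length:
  "is_walk V E p \<Longrightarrow> gdist V E (hd p) (last p) \<le> enat (length p - 1)"
  unfolding gdist_def by (intro INF_lower) auto

lemma card_le_walk_length:
  fixes f :: "'v \<Rightarrow> 'v \<Rightarrow> 'b set"
  assumes triangle: "\<And>a b c. a \<in> V \<Longrightarrow> b \<in> V \<Longrightarrow> c \<in> V \<Longrightarrow> f a c \<subseteq> f a b \<union> f b c"
    and finite: "\<And>a b. a \<in> V \<Longrightarrow> b \<in> V \<Longrightarrow> finite (f a b)"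
    and edge: "\<And>a b. a \<in> V \<Longrightarrow> b \<in> V \<Longrightarrow> E a b \<Longrightarrow> card (f a b) \<le> 1"
    and refl: "\<And>a. a \<in> V \<Longrightarrow> f a a = {}"
  shows "is_walk V E p \<Longrightarrow> card (f (hd p) (last p)) \<le> length p - 1"
proof (induction p)
  case (Cons a p)
  show ?case
  proof (cases p)
    case Nil
    then show ?thesis using Cons.prems refl by (simp add: is_walk_def)
  next
    case (Cons b q)
    have walk: "is_walk V E p" "E a b" "a \<in> V"
      using Cons.prems Cons by (auto simp: is_walk_Cons)
    have V: "b \<in> V" "last p \<in> V" using walk(1) Cons by (auto simp: is_walk_def)
    have "card (f a (last p)) \<le> card (f a b \<union> f b (last p))"
      using triangle[OF walk(3) V] finite walk(3) V by (intro card_mono) auto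
    also have "\<dots> \<le> card (f a b) + card (f b (last p))" by (rule card_Un_le)
    also have "\<dots> \<le> 1 + (length p - 1)"
      using edge[OF walk(3) V(1) walk(2)] Cons.IH[OF walk(1)] Cons by simp
    finally show ?thesis using Cons by simp
  qed
qed (simp add: is_walk_def)

lemma card_le_gdist:
  fixes f :: "'v \<Rightarrow> 'v \<Rightarrow> 'b set"
  assumes "\<And>a b c. a \<in> V \<Longrightarrow> b \<in> V \<Longrightarrow> c \<in> V \<Longrightarrow> f a c \<subseteq> f a b \<union> f b c"
    and "\<And>a b. a \<in> V \<Longrightarrow> b \<in> V \<Longrightarrow> finite (f a b)"
    and "\<And>a b. a \<in> V \<Longrightarrow> b \<in> V \<Longrightarrow> E a b \<Longrightarrow> card (f a b) \<le> 1"
    and "\<And>a. a \<in> V \<Longrightarrow> f a a = {}"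
  shows "enat (card (f u v)) \<le> gdist V E u v"
  unfolding gdist_def
  using card_le_walk_length[of V f E, OF assms] by (intro INF_greatest) auto

lemma gdist_le_gdiameter: "u \<in> V \<Longrightarrow> v \<in> V \<Longrightarrow> gdist V E u v \<le> gdiameter V E"
  unfolding gdiameter_def by (meson SUP_upper SUP_upper2)

lemma gdiameter_le:
  "(\<And>u v. u \<in> V \<Longrightarrow> v \<in> V \<Longrightarrow> gdist V E u v \<le> b) \<Longrightarrow> gdiameter V E \<le> b"
  unfolding gdiameter_def by (intro SUP_least)

lemma interpolation_sign_same:
  fixes a b t :: real
  assumes "0 < a * b" "0 \<le> t" "t \<le> 1"
  shows "a + t * (b - a) \<noteq> 0 \<and> (0 < a + t * (b - a) \<longleftrightarrow> 0 < a)"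
proof -
  have "a + t * (b - a) = (1 - t) * a + t * b" by (simp add: algebra_simps)
  moreover from assms(1) consider "0 < a" "0 < b" | "a < 0" "b < 0"
    by (auto simp: zero_less_mult_iff)
  ultimately show ?thesis using assms(2,3)
    by (smt (verit) mult_nonneg_nonneg mult_pos_pos mult_nonneg_nonpos mult_pos_neg)
qed

lemma interpolation_root:
  fixes a b :: real
  assumes "a * b < 0"
  shows "0 < a / (a - b)" "a / (a - b) < 1" "a + a / (a - b) * (b - a) = 0"
  using assms by (auto simp: mult_less_0_iff field_simps)

lemma interpolation_sign_opposite:
  fixes a b t :: real
  assumes "a * b < 0" "t \<noteq> a / (a - b)"
  shows "a + t * (b - a) \<noteq> 0 \<and> (0 < a + t * (b - a) \<longleftrightarrow> (0 < a \<longleftrightarrow> t < a / (a - b)))"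
proof -
  have ab: "a - b \<noteq> 0" "0 < a - b \<longleftrightarrow> 0 < a" using assms(1) by (auto simp: mult_less_0_iff)
  have "a + t * (b - a) = (a - b) * (a / (a - b) - t)" using ab(1) by (simp add: field_simps)
  then show ?thesis using ab assms(2) by (auto simp: zero_less_mult_iff)
qed

lemma mult_less_0_iff_signs_differ:
  fixes a b :: real
  shows "a \<noteq> 0 \<Longrightarrow> b \<noteq> 0 \<Longrightarrow> a * b < 0 \<longleftrightarrow> (0 < a) \<noteq> (0 < b)"
  by (auto simp: mult_less_0_iff)

lemma inner_segment: "a \<bullet> (x + t *\<^sub>R (y - x)) = a \<bullet> x + t * (a \<bullet> y - a \<bullet> x)"
  by (simp add: inner_add_right inner_diff_right)

lemma normal_parallel_if_hyperplane_subset: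
  fixes a b :: "'a::euclidean_space"
  assumes "a \<noteq> 0" "{x. a \<bullet> x = 0} \<subseteq> {x. b \<bullet> x = 0}"
  shows "\<exists>k. b = k *\<^sub>R a"
proof -
  define k where "k = (a \<bullet> b) / (a \<bullet> a)"
  have "a \<bullet> (b - k *\<^sub>R a) = 0"
    using assms(1) by (simp add: k_def inner_diff_right inner_commute)
  moreover from this have "b \<bullet> (b - k *\<^sub>R a) = 0" using assms(2) by blast
  ultimately have "(b - k *\<^sub>R a) \<bullet> (b - k *\<^sub>R a) = 0" by (simp add: inner_diff_left)
  then show ?thesis by auto
qed

lemma interior_Union_lowdim:
  fixes F :: "'a::euclidean_space set set"
  assumes "finite F" "\<And>S. S \<in> F \<Longrightarrow> closed S \<and> dim S < DIM('a)"
  shows "interior (\<Union>F) = {}"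
  using assms
proof (induction F rule: finite_induct)
  case (insert S F)
  have "interior (\<Union>F \<union> S) = interior (\<Union>F)"
    by (rule interior_closed_Un_empty_interior)
      (use insert in \<open>auto intro!: closed_Union empty_interior_lowdim\<close>)
  then show ?case using insert by (simp add: Un_commute)
qed simp

lemma rev_neq_if_distinct: "distinct xs \<Longrightarrow> 2 \<le> length xs \<Longrightarrow> rev xs \<noteq> xs"
proof
  assume xs: "distinct xs" "2 \<le> length xs" and "rev xs = xs"
  have "rev xs ! 0 = xs ! (length xs - 1)" using xs(2) by (subst rev_nth) auto
  then have "xs ! 0 = xs ! (length xs - 1)" using \<open>rev xs = xs\<close> by simp
  moreover have "0 < length xs" "length xs - 1 < length xs" using xs(2) by auto
  ultimately have "(0::nat) = length xs - 1" using nth_eq_iff_index_eq[OF xs(1)] by blast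
  then show False using xs(2) by simp
qed

definition opposite_gallery :: "'a::real_vector set list \<Rightarrow> 'a set list" where
  "opposite_gallery r = rev (map ((`) uminus) r)"

lemma nth_opposite_gallery:
  "i < length r \<Longrightarrow> opposite_gallery r ! i = uminus ` (r ! (length r - Suc i))"
  unfolding opposite_gallery_def by (simp add: rev_nth)

lemma length_opposite_gallery [simp]: "length (opposite_gallery r) = length r"
  unfolding opposite_gallery_def by simp

locale central_arrangement =
  fixes A :: "'a::euclidean_space set set"
  assumes finite_arrangement: "finite A"
    and linear_hyperplanes: "\<And>H. H \<in> A \<Longrightarrow> linear_hyperplane H"
begin

definition normal :: "'a set \<Rightarrow> 'a" where
  "normal H = (SOME a. a \<noteq> 0 \<and> H = {x. a \<bullet> x = 0})"

lemma normal_spec: "H \<in> A \<Longrightarrow> normal H \<noteq> 0 \<and> H = {x. normal H \<bullet> x = 0}"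
  unfolding normal_def
  by (rule someI_ex) (use linear_hyperplanes in \<open>auto simp: linear_hyperplane_def\<close>)

lemma hyperplane_subspace: "H \<in> A \<Longrightarrow> subspace H \<and> closed H \<and> dim H = DIM('a) - 1"
  using normal_spec[of H] by (metis subspace_hyperplane closed_hyperplane dim_hyperplane)

definition complement :: "'a set" where
  "complement = - \<Union>A"

lemma in_complement_iff: "x \<in> complement \<longleftrightarrow> (\<forall>H\<in>A. normal H \<bullet> x \<noteq> 0)"
  unfolding complement_def using normal_spec by blast

lemma uminus_in_complement: "x \<in> complement \<Longrightarrow> -x \<in> complement"
  by (simp add: in_complement_iff)

lemma complement_nonempty: "complement \<noteq> {}"
proof
  assume "complement = {}"
  then have "\<Union>A = UNIV" unfolding complement_def by auto
  moreover have "interior (\<Union>A) = {}"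
    using finite_arrangement hyperplane_subspace by (intro interior_Union_lowdim) auto
  ultimately show False by simp
qed

subsection \<open>Sign vectors and chambers\<close>

definition separating :: "'a \<Rightarrow> 'a \<Rightarrow> 'a set set" where
  "separating x y = {H\<in>A. (0 < normal H \<bullet> x) \<noteq> (0 < normal H \<bullet> y)}"

definition chamber_of :: "'a \<Rightarrow> 'a set" where
  "chamber_of x = {y \<in> complement. separating x y = {}}"

lemma finite_separating: "finite (separating x y)"
  using finite_arrangement unfolding separating_def by auto

lemma separating_subset: "separating x y \<subseteq> A"
  unfolding separating_def by auto

lemma separating_self: "separating x x = {}"
  unfolding separating_def by auto

lemma separating_commute: "separating x y = separating y x"
  unfolding separating_def by auto

lemma separating_triangle: "separating x z \<subseteq> separating x y \<union> separating y z"
  unfolding separating_def by auto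

lemma separating_sym_diff:
  "separating w y = (separating x w - separating x y) \<union> (separating x y - separating x w)"
  unfolding separating_def by auto

lemma separating_uminus:
  "x \<in> complement \<Longrightarrow> y \<in> complement \<Longrightarrow> separating (-x) (-y) = separating x y"
  unfolding separating_def in_complement_iff by (force simp: less_le)

lemma separating_antipodal: "x \<in> complement \<Longrightarrow> separating x (-x) = A"
  unfolding separating_def in_complement_iff by (force simp: less_le)

lemma mem_chamber_of_self: "x \<in> complement \<Longrightarrow> x \<in> chamber_of x"
  by (simp add: chamber_of_def separating_self)

lemma separating_chamber_of: "y' \<in> chamber_of y \<Longrightarrow> separating x y' = separating x y"
  unfolding chamber_of_def separating_def by auto

lemma chamber_of_eq: "y \<in> chamber_of x \<Longrightarrow> chamber_of y = chamber_of x"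
  unfolding chamber_of_def separating_def by auto

lemma chamber_of_eq_Inter_halfspaces:
  assumes "x \<in> complement"
  shows "chamber_of x = (\<Inter>H\<in>A. if 0 < normal H \<bullet> x
    then {y. 0 < normal H \<bullet> y} else {y. normal H \<bullet> y < 0})"
proof (intro set_eqI iffI)
  fix y assume "y \<in> chamber_of x"
  then show "y \<in> (\<Inter>H\<in>A. if 0 < normal H \<bullet> x
    then {y. 0 < normal H \<bullet> y} else {y. normal H \<bullet> y < 0})"
    unfolding chamber_of_def separating_def in_complement_iff by (auto simp: less_le)
next
  fix y assume y: "y \<in> (\<Inter>H\<in>A. if 0 < normal H \<bullet> x
    then {y. 0 < normal H \<bullet> y} else {y. normal H \<bullet> y < 0})"
  have "(0 < normal H \<bullet> y \<longleftrightarrow> 0 < normal H \<bullet> x) \<and> normal H \<bullet> y \<noteq> 0" if "H \<in> A" for H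
    using INT_D[OF y that] by (cases "0 < normal H \<bullet> x") auto
  then show "y \<in> chamber_of x"
    unfolding chamber_of_def separating_def in_complement_iff by auto
qed

lemma open_chamber_of: "x \<in> complement \<Longrightarrow> open (chamber_of x)"
  unfolding chamber_of_eq_Inter_halfspaces
  by (intro open_INT finite_arrangement ballI) (simp add: open_halfspace_gt open_halfspace_lt)

lemma convex_chamber_of: "x \<in> complement \<Longrightarrow> convex (chamber_of x)"
  unfolding chamber_of_eq_Inter_halfspaces
  by (intro convex_INT ballI) (simp add: convex_halfspace_gt convex_halfspace_lt)

lemma separating_connected:
  assumes "connected D" "D \<subseteq> complement" "p \<in> D" "q \<in> D"
  shows "separating p q = {}"
proof (rule ccontr)
  assume "separating p q \<noteq> {}"
  then obtain H where H: "H \<in> A" "(0 < normal H \<bullet> p) \<noteq> (0 < normal H \<bullet> q)"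
    unfolding separating_def by auto
  then obtain z where "z \<in> D" "normal H \<bullet> z = 0"
    using connected_ivt_hyperplane[OF assms(1) assms(3,4), of "normal H" 0]
      connected_ivt_hyperplane[OF assms(1) assms(4,3), of "normal H" 0]
    by (cases "0 < normal H \<bullet> p") auto
  then show False using assms(2) H(1) by (auto simp: in_complement_iff)
qed

lemma chambers_eq_image: "chambers A = chamber_of ` complement"
proof -
  have component: "chamber_of x \<in> components complement" if x: "x \<in> complement" for x
    unfolding in_components_maximal
  proof (intro conjI allI impI)
    show "chamber_of x \<noteq> {}" using mem_chamber_of_self x by auto
    show "chamber_of x \<subseteq> complement" unfolding chamber_of_def by auto
    show "connected (chamber_of x)" using convex_chamber_of[OF x] convex_connected by blast
    fix D assume D: "D \<noteq> {} \<and> chamber_of x \<subseteq> D \<and> D \<subseteq> complement \<and> connected D"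
    then have "x \<in> D" using mem_chamber_of_self x by auto
    then have "D \<subseteq> chamber_of x"
      using D separating_connected[of D x] unfolding chamber_of_def by auto
    then show "D = chamber_of x" using D by auto
  qed
  have "C \<in> chamber_of ` complement" if C: "C \<in> components complement" for C
  proof -
    obtain x where x: "x \<in> C" using C in_components_nonempty by blast
    then have "x \<in> complement" using C in_components_subset by blast
    then have "C = chamber_of x"
      using components_nonoverlap[OF C component] x mem_chamber_of_self by blast
    then show ?thesis using \<open>x \<in> complement\<close> by blast
  qed
  then show ?thesis
    using component unfolding chambers_def complement_def[symmetric] by blast
qed

lemma L1sep_chamber_of:
  assumes x: "x \<in> complement" and y: "y \<in> complement"
  shows "L1sep A (chamber_of x) (chamber_of y) = separating x y"
proof (intro set_eqI iffI)
  fix H assume "H \<in> L1sep A (chamber_of x) (chamber_of y)"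
  then obtain a p q where H: "H \<in> A" "a \<noteq> 0" "H = {x. a \<bullet> x = 0}"
      and pq: "p \<in> chamber_of x" "q \<in> chamber_of y" "(a \<bullet> p) * (a \<bullet> q) < 0"
    unfolding L1sep_def separates_def by blast
  obtain k where "a = k *\<^sub>R normal H"
    using normal_parallel_if_hyperplane_subset[of "normal H" a] normal_spec[OF H(1)] H by auto
  then have "(a \<bullet> p) * (a \<bullet> q) = k\<^sup>2 * ((normal H \<bullet> p) * (normal H \<bullet> q))"
    by (simp add: power2_eq_square)
  with pq(3) have "(normal H \<bullet> p) * (normal H \<bullet> q) < 0"
    by (metis mult_nonneg_nonneg not_less zero_le_power2)
  then have "H \<in> separating p q" using H(1) by (auto simp: separating_def mult_less_0_iff)
  then show "H \<in> separating x y"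
    using separating_chamber_of[OF pq(1)] separating_chamber_of[OF pq(2)] separating_commute
    by metis
next
  fix H assume "H \<in> separating x y"
  then have H: "H \<in> A" "(0 < normal H \<bullet> x) \<noteq> (0 < normal H \<bullet> y)"
    unfolding separating_def by auto
  then have "(normal H \<bullet> x) * (normal H \<bullet> y) < 0"
    using x y by (simp add: in_complement_iff mult_less_0_iff_signs_differ)
  then show "H \<in> L1sep A (chamber_of x) (chamber_of y)"
    unfolding L1sep_def separates_def
    using normal_spec[OF H(1)] H(1) mem_chamber_of_self[OF x] mem_chamber_of_self[OF y] by blast
qed

lemma uminus_chamber_of: "x \<in> complement \<Longrightarrow> uminus ` chamber_of x = chamber_of (-x)"
proof (intro set_eqI iffI)
  fix y assume "x \<in> complement" "y \<in> chamber_of (-x)"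
  then have "-y \<in> chamber_of x"
    unfolding chamber_of_def using separating_uminus uminus_in_complement by fastforce
  then show "y \<in> uminus ` chamber_of x" by (metis image_eqI minus_minus)
next
  fix y assume "x \<in> complement" "y \<in> uminus ` chamber_of x"
  then show "y \<in> chamber_of (-x)"
    unfolding chamber_of_def using separating_uminus uminus_in_complement by fastforce
qed

lemma chambers_uminus:
  assumes "c \<in> chambers A" "d \<in> chambers A"
  shows "uminus ` c \<in> chambers A" "L1sep A (uminus ` d) (uminus ` c) = L1sep A c d"
proof -
  obtain x y where xy: "x \<in> complement" "y \<in> complement" "c = chamber_of x" "d = chamber_of y"
    using assms chambers_eq_image by auto
  show "uminus ` c \<in> chambers A"
    using xy uminus_chamber_of uminus_in_complement chambers_eq_image by auto
  show "L1sep A (uminus ` d) (uminus ` c) = L1sep A c d"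
    using xy uminus_chamber_of L1sep_chamber_of uminus_in_complement separating_uminus
      separating_commute by simp
qed

lemma L1sep_antipodal: "c \<in> chambers A \<Longrightarrow> L1sep A c (uminus ` c) = A"
  using chambers_eq_image uminus_chamber_of L1sep_chamber_of uminus_in_complement
    separating_antipodal by auto

lemma L1sep_self: "c \<in> chambers A \<Longrightarrow> L1sep A c c = {}"
  using L1sep_chamber_of separating_self chambers_eq_image by auto

lemma L1sep_triangle:
  assumes "a \<in> chambers A" "b \<in> chambers A" "c \<in> chambers A"
  shows "L1sep A a c \<subseteq> L1sep A a b \<union> L1sep A b c"
proof -
  obtain x y z where "x \<in> complement" "y \<in> complement" "z \<in> complement"
    "a = chamber_of x" "b = chamber_of y" "c = chamber_of z"
    using assms chambers_eq_image by (auto simp: image_iff)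
  then show ?thesis using L1sep_chamber_of separating_triangle by simp
qed

lemma finite_L1sep: "finite (L1sep A c d)"
  using finite_arrangement unfolding L1sep_def by auto

subsection \<open>Galleries along generic segments\<close>

definition generic_for :: "'a \<Rightarrow> 'a \<Rightarrow> bool" where
  "generic_for x y \<longleftrightarrow> (\<forall>H\<in>A. \<forall>G\<in>A. H \<noteq> G \<longrightarrow> y \<notin> span (insert x (H \<inter> G)))"

lemma dim_span_insert_Int_less:
  assumes "H \<in> A" "G \<in> A" "H \<noteq> G"
  shows "dim (span (insert x (H \<inter> G))) < DIM('a)"
proof -
  have H: "subspace H" "dim H = DIM('a) - 1" and G: "subspace G" "dim G = DIM('a) - 1"
    using hyperplane_subspace assms by auto
  have "\<not> H \<subseteq> G" using subspace_dim_equal[OF H(1) G(1)] H G assms(3) by auto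
  then have "H \<inter> G \<subset> H" by auto
  then have "span (H \<inter> G) \<subset> span H"
    using H G by (simp add: span_eq_iff[THEN iffD2] subspace_inter)
  then have "dim (H \<inter> G) < dim H" by (rule dim_psubset)
  moreover have "dim (insert x (H \<inter> G)) \<le> dim (H \<inter> G) + 1" by (simp add: dim_insert)
  ultimately show ?thesis using H by (simp add: dim_span)
qed

lemma exists_generic_point:
  assumes "open W" "W \<noteq> {}"
  obtains y where "y \<in> W" "generic_for x y"
proof -
  let ?F = "(\<lambda>(H, G). span (insert x (H \<inter> G))) ` {(H, G). H \<in> A \<and> G \<in> A \<and> H \<noteq> G}"
  have "interior (\<Union>?F) = {}"
  proof (rule interior_Union_lowdim)
    show "finite ?F"
      using finite_arrangement by (auto intro: finite_subset[of _ "A \<times> A"])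
    fix S assume "S \<in> ?F"
    then obtain H G where "H \<in> A" "G \<in> A" "H \<noteq> G" "S = span (insert x (H \<inter> G))" by auto
    then show "closed S \<and> dim S < DIM('a)"
      using dim_span_insert_Int_less by (auto intro: closed_subspace)
  qed
  then have "\<not> W \<subseteq> \<Union>?F" using assms interior_maximal by blast
  then show ?thesis using that unfolding generic_for_def by blast
qed

definition crossing_time :: "'a \<Rightarrow> 'a \<Rightarrow> 'a set \<Rightarrow> real" where
  "crossing_time x y H = (normal H \<bullet> x) / (normal H \<bullet> x - normal H \<bullet> y)"

lemma separating_product_neg:
  "x \<in> complement \<Longrightarrow> y \<in> complement \<Longrightarrow> H \<in> A \<Longrightarrow>
    H \<in> separating x y \<longleftrightarrow> (normal H \<bullet> x) * (normal H \<bullet> y) < 0"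
  unfolding separating_def in_complement_iff by (simp add: mult_less_0_iff_signs_differ)

lemma separating_segment:
  assumes x: "x \<in> complement" and y: "y \<in> complement" and t: "0 \<le> t" "t \<le> 1"
    and not_crossing: "\<And>H. H \<in> separating x y \<Longrightarrow> crossing_time x y H \<noteq> t"
  defines "w \<equiv> x + t *\<^sub>R (y - x)"
  shows "w \<in> complement"
    and "separating x w = {H \<in> separating x y. crossing_time x y H < t}"
proof -
  have sign: "normal H \<bullet> w \<noteq> 0 \<and>
      ((0 < normal H \<bullet> x) \<noteq> (0 < normal H \<bullet> w) \<longleftrightarrow>
        H \<in> separating x y \<and> crossing_time x y H < t)" if H: "H \<in> A" for H
  proof (cases "H \<in> separating x y")
    case True
    then show ?thesis
      using interpolation_sign_opposite[of "normal H \<bullet> x" "normal H \<bullet> y" t]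
        separating_product_neg[OF x y H] not_crossing[OF True]
      unfolding w_def inner_segment crossing_time_def by auto
  next
    case False
    moreover have "(normal H \<bullet> x) * (normal H \<bullet> y) \<noteq> 0"
      using x y H by (simp add: in_complement_iff)
    ultimately have "0 < (normal H \<bullet> x) * (normal H \<bullet> y)"
      using separating_product_neg[OF x y H] by linarith
    then show ?thesis
      using interpolation_sign_same[of "normal H \<bullet> x" "normal H \<bullet> y" t] t False
      unfolding w_def inner_segment by auto
  qed
  then show "w \<in> complement" by (simp add: in_complement_iff)
  show "separating x w = {H \<in> separating x y. crossing_time x y H < t}"
    using sign separating_subset unfolding separating_def[of x w] by blast
qed

lemma crossing_time_root:
  assumes x: "x \<in> complement" and y: "y \<in> complement" and H: "H \<in> separating x y"
  shows "0 < crossing_time x y H" "crossing_time x y H < 1"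
    "normal H \<bullet> (x + crossing_time x y H *\<^sub>R (y - x)) = 0"
proof -
  have "(normal H \<bullet> x) * (normal H \<bullet> y) < 0"
    using separating_product_neg[OF x y] H separating_subset by blast
  from interpolation_root[OF this] show "0 < crossing_time x y H" "crossing_time x y H < 1"
    "normal H \<bullet> (x + crossing_time x y H *\<^sub>R (y - x)) = 0"
    unfolding crossing_time_def inner_segment by (simp_all add: algebra_simps)
qed

lemma crossing_times_distinct:
  assumes x: "x \<in> complement" and y: "y \<in> complement"
    and generic: "generic_for x y"
    and HG: "H \<in> separating x y" "G \<in> separating x y" "H \<noteq> G"
  shows "crossing_time x y H \<noteq> crossing_time x y G"
proof
  assume eq: "crossing_time x y H = crossing_time x y G"
  define t where "t = crossing_time x y H"
  define z where "z = x + t *\<^sub>R (y - x)"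
  have A: "H \<in> A" "G \<in> A" using HG separating_subset by auto
  have "z \<in> H \<inter> G"
    using crossing_time_root(3)[OF x y HG(1)] crossing_time_root(3)[OF x y HG(2)] eq
      normal_spec[OF A(1)] normal_spec[OF A(2)]
    unfolding z_def t_def by auto
  then have "(1 - 1 / t) *\<^sub>R x + (1 / t) *\<^sub>R z \<in> span (insert x (H \<inter> G))"
    by (intro span_add span_mul) (auto intro: span_base)
  moreover have "(1 - 1 / t) *\<^sub>R x + (1 / t) *\<^sub>R z = y"
    using crossing_time_root(1)[OF x y HG(1)] unfolding z_def t_def by (simp add: algebra_simps)
  ultimately show False using generic HG(3) A unfolding generic_for_def by blast
qed

text \<open>
  Step to a point just beyond the first crossing of the segment from x to y: it lies in the
  chamber on the other side of exactly one separating hyperplane.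
\<close>

lemma exists_adjacent_step:
  assumes x: "x \<in> complement" and y: "y \<in> complement"
    and generic: "generic_for x y"
    and nonempty: "separating x y \<noteq> {}"
  obtains H w where "w \<in> complement" "H \<in> separating x y" "separating x w = {H}"
    "separating w y = separating x y - {H}"
proof -
  let ?S = "separating x y" and ?\<tau> = "crossing_time x y"
  obtain H where H: "H \<in> ?S" "?\<tau> H = Min (?\<tau> ` ?S)"
    using Min_in[of "?\<tau> ` ?S"] finite_separating nonempty by fastforce
  have first: "?\<tau> H < ?\<tau> G" if "G \<in> ?S" "G \<noteq> H" for G
    using crossing_times_distinct[OF x y generic H(1) that(1)] that H finite_separating
    by (metis Min_le finite_imageI image_eqI order_le_neq_trans)
  define t1 where "t1 = Min (insert 1 (?\<tau> ` (?S - {H})))"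
  have t1: "?\<tau> H < t1" "t1 \<le> 1" "\<And>G. G \<in> ?S - {H} \<Longrightarrow> t1 \<le> ?\<tau> G"
    unfolding t1_def using finite_separating first crossing_time_root(2)[OF x y H(1)] by auto
  define t where "t = (?\<tau> H + t1) / 2"
  have t: "0 \<le> t" "t \<le> 1" "?\<tau> H < t" "\<And>G. G \<in> ?S - {H} \<Longrightarrow> t < ?\<tau> G"
    using t1 crossing_time_root(1)[OF x y H(1)] unfolding t_def by fastforce+
  then have not_crossing: "?\<tau> G \<noteq> t" if "G \<in> ?S" for G
    using that by (cases "G = H") fastforce+
  define w where "w = x + t *\<^sub>R (y - x)"
  have w: "w \<in> complement" "separating x w = {H}"
    using separating_segment[OF x y t(1,2) not_crossing] H(1) t(3,4)
    unfolding w_def[symmetric] by force+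
  moreover have "separating w y = ?S - {H}"
    using separating_sym_diff[of w y x] w(2) H(1) by auto
  ultimately show ?thesis using that H(1) by blast
qed

lemma adj1_chamber_of:
  "x \<in> complement \<Longrightarrow> y \<in> complement \<Longrightarrow>
    adj1 A (chamber_of x) (chamber_of y) \<longleftrightarrow> card (separating x y) = 1"
  by (simp add: adj1_def L1sep_chamber_of)

lemma exists_gallery:
  "x \<in> complement \<Longrightarrow> y \<in> complement \<Longrightarrow>
    \<exists>p. is_walk (chambers A) (adj1 A) p \<and> hd p = chamber_of x \<and> last p = chamber_of y \<and>
      length p = Suc (card (separating x y))"
proof (induction "card (separating x y)" arbitrary: x y)
  case 0
  then have "y \<in> chamber_of x" using finite_separating[of x y] by (simp add: chamber_of_def)
  then have "chamber_of y = chamber_of x" by (rule chamber_of_eq)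
  moreover have "chamber_of x \<in> chambers A" using 0 chambers_eq_image by auto
  ultimately show ?case
    using 0 by (intro exI[of _ "[chamber_of x]"]) (auto simp: is_walk_def)
next
  case (Suc n)
  obtain y' where y': "y' \<in> chamber_of y" "generic_for x y'"
    using exists_generic_point[OF open_chamber_of[OF Suc.prems(2)]]
      mem_chamber_of_self[OF Suc.prems(2)] by blast
  have "y' \<in> complement" using y'(1) unfolding chamber_of_def by blast
  note y'_props = this chamber_of_eq[OF y'(1)] separating_chamber_of[OF y'(1), of x]
  have "separating x y' \<noteq> {}" using Suc.hyps(2) unfolding y'_props(3) by auto
  obtain H w where w: "w \<in> complement" "H \<in> separating x y'" "separating x w = {H}"
      "separating w y' = separating x y' - {H}"
    by (rule exists_adjacent_step[OF Suc.prems(1) y'_props(1) y'(2) \<open>separating x y' \<noteq> {}\<close>])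
  have "n = card (separating w y')"
    using w(2,4) y'_props(3) Suc.hyps(2) finite_separating by simp
  from Suc.hyps(1)[OF this w(1) y'_props(1)] obtain p where p:
    "is_walk (chambers A) (adj1 A) p" "hd p = chamber_of w" "last p = chamber_of y'"
    "length p = Suc (card (separating w y'))" by blast
  have "is_walk (chambers A) (adj1 A) (chamber_of x # p)"
    using p adj1_chamber_of[OF Suc.prems(1) w(1)] w(3) chambers_eq_image Suc.prems(1)
    by (auto simp: is_walk_Cons)
  moreover have "p \<noteq> []" using p(4) by auto
  ultimately show ?case
    using p y'_props(2) Suc.hyps(2) \<open>n = _\<close> by (intro exI[of _ "chamber_of x # p"]) auto
qed

lemma gdist_chambers:
  assumes "c \<in> chambers A" "d \<in> chambers A"
  shows "gdist (chambers A) (adj1 A) c d = enat (card (L1sep A c d))"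
proof (rule antisym)
  obtain x y where xy: "x \<in> complement" "y \<in> complement" "c = chamber_of x" "d = chamber_of y"
    using assms chambers_eq_image by auto
  then obtain p where "is_walk (chambers A) (adj1 A) p" "hd p = c" "last p = d"
    "length p = Suc (card (L1sep A c d))"
    using exists_gallery[OF xy(1,2)] L1sep_chamber_of by auto
  then show "gdist (chambers A) (adj1 A) c d \<le> enat (card (L1sep A c d))"
    using gdist_le_walk_length by fastforce
  show "enat (card (L1sep A c d)) \<le> gdist (chambers A) (adj1 A) c d"
    by (rule card_le_gdist)
      (use L1sep_triangle finite_L1sep L1sep_self in \<open>auto simp: adj1_def\<close>)
qed

lemma gdiameter_chambers: "gdiameter (chambers A) (adj1 A) = enat (card A)"
proof (rule antisym)
  show "gdiameter (chambers A) (adj1 A) \<le> enat (card A)"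
    by (rule gdiameter_le)
      (simp add: gdist_chambers card_mono finite_arrangement L1sep_def)
  obtain x where "x \<in> complement" using complement_nonempty by auto
  then have c: "chamber_of x \<in> chambers A" using chambers_eq_image by auto
  then have "enat (card A) = gdist (chambers A) (adj1 A) (chamber_of x) (uminus ` chamber_of x)"
    using gdist_chambers chambers_uminus(1) L1sep_antipodal by simp
  also have "\<dots> \<le> gdiameter (chambers A) (adj1 A)"
    using c chambers_uminus(1)[OF c c] by (rule gdist_le_gdiameter)
  finally show "enat (card A) \<le> gdiameter (chambers A) (adj1 A)" .
qed

subsection \<open>Minimal galleries and the graph G_2\<close>

lemma length_crossings: "length (crossings A r) = length r - 1"
  unfolding crossings_def by simp

lemma nth_crossings:
  "i < length r - 1 \<Longrightarrow> crossings A r ! i = (THE H. L1sep A (r ! i) (r ! Suc i) = {H})"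
  unfolding crossings_def by simp

lemma L1sep_gallery_step:
  assumes "is_walk (chambers A) (adj1 A) r" "i < length r - 1"
  shows "L1sep A (r ! i) (r ! Suc i) = {crossings A r ! i}"
proof -
  have "card (L1sep A (r ! i) (r ! Suc i)) = 1"
    using is_walk_nth[OF assms(1), of i] assms(2) by (simp add: adj1_def)
  then obtain H where H: "L1sep A (r ! i) (r ! Suc i) = {H}" by (rule card_1_singletonE)
  then show ?thesis using nth_crossings[OF assms(2)] by simp
qed

lemma L1sep_subset_crossings:
  assumes r: "is_walk (chambers A) (adj1 A) r"
  shows "k < length r \<Longrightarrow> L1sep A (hd r) (r ! k) \<subseteq> set (take k (crossings A r))"
proof (induction k)
  case 0
  have "r \<noteq> []" "hd r \<in> chambers A" using r by (auto simp: is_walk_def)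
  then show ?case using L1sep_self by (simp add: hd_conv_nth)
next
  case (Suc k)
  have k: "k < length r - 1" using Suc.prems by simp
  have "hd r \<in> chambers A" "r ! k \<in> chambers A" "r ! Suc k \<in> chambers A"
    using r Suc.prems is_walk_nth[OF r, of k] by (auto simp: is_walk_def)
  then have "L1sep A (hd r) (r ! Suc k) \<subseteq> L1sep A (hd r) (r ! k) \<union> L1sep A (r ! k) (r ! Suc k)"
    by (rule L1sep_triangle)
  also have "\<dots> \<subseteq> set (take k (crossings A r)) \<union> {crossings A r ! k}"
    using Suc.IH Suc.prems L1sep_gallery_step[OF r k] by auto
  also have "\<dots> = set (take (Suc k) (crossings A r))"
    using k length_crossings[of r] by (simp add: take_Suc_conv_app_nth)
  finally show ?case .
qed

lemma crossings_geodesic: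
  assumes r: "is_walk (chambers A) (adj1 A) r"
    and len: "length r = Suc (card (L1sep A (hd r) (last r)))"
  shows "set (crossings A r) = L1sep A (hd r) (last r)" "distinct (crossings A r)"
proof -
  have "r \<noteq> []" using len by auto
  then have "last r = r ! (length r - 1)" by (simp add: last_conv_nth)
  then have sub: "L1sep A (hd r) (last r) \<subseteq> set (crossings A r)"
    using L1sep_subset_crossings[OF r, of "length r - 1"] len length_crossings[of r] by auto
  have le: "card (set (crossings A r)) \<le> card (L1sep A (hd r) (last r))"
    using card_length[of "crossings A r"] len length_crossings[of r] by simp
  show eq: "set (crossings A r) = L1sep A (hd r) (last r)"
    using card_subset_eq[OF _ sub] le card_mono[OF _ sub] finite_L1sep by auto
  show "distinct (crossings A r)"
    using eq card_length[of "crossings A r"] len length_crossings[of r]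
    by (intro card_distinct) simp
qed

lemma min_galleries_crossings:
  assumes "r \<in> min_galleries A c0"
  shows "set (crossings A r) = A" "distinct (crossings A r)"
proof -
  have r: "is_walk (chambers A) (adj1 A) r" "hd r = c0" "last r = uminus ` c0"
    "enat (length r - 1) = gdist (chambers A) (adj1 A) c0 (uminus ` c0)"
    using assms unfolding min_galleries_def by auto
  then have c0: "c0 \<in> chambers A" by (auto simp: is_walk_def)
  then have "L1sep A (hd r) (last r) = A" using r L1sep_antipodal by simp
  moreover have "length r = Suc (card A)"
    using r(1,4) gdist_chambers[OF c0 chambers_uminus(1)[OF c0 c0]] L1sep_antipodal[OF c0]
    by (cases r) (auto simp: is_walk_def)
  ultimately show "set (crossings A r) = A" "distinct (crossings A r)"
    using crossings_geodesic[OF r(1)] by auto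
qed

lemma min_galleries_nonempty:
  assumes "c0 \<in> chambers A"
  shows "min_galleries A c0 \<noteq> {}"
proof -
  obtain x where x: "x \<in> complement" "c0 = chamber_of x" using assms chambers_eq_image by auto
  then obtain r where "is_walk (chambers A) (adj1 A) r" "hd r = c0" "last r = uminus ` c0"
    "length r = Suc (card A)"
    using exists_gallery[OF x(1) uminus_in_complement[OF x(1)]] uminus_chamber_of
      separating_antipodal by auto
  then have "r \<in> min_galleries A c0"
    using gdist_chambers[OF assms chambers_uminus(1)[OF assms assms]] L1sep_antipodal[OF assms]
    unfolding min_galleries_def by simp
  then show ?thesis by blast
qed

lemma L1sep_opposite_gallery_step:
  assumes "set r \<subseteq> chambers A" "Suc i < length r"
  defines "j \<equiv> length r - Suc (Suc i)"
  shows "L1sep A (opposite_gallery r ! i) (opposite_gallery r ! Suc i) = L1sep A (r ! j) (r ! Suc j)"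
proof -
  have j: "Suc j < length r" "length r - Suc i = Suc j" using assms(2) unfolding j_def by auto
  then show ?thesis
    using chambers_uminus(2)[of "r ! j" "r ! Suc j"] assms nth_opposite_gallery[of i r]
      nth_opposite_gallery[of "Suc i" r] by (simp add: j_def subsetD)
qed

lemma opposite_gallery_walk:
  assumes r: "is_walk (chambers A) (adj1 A) r"
  shows "is_walk (chambers A) (adj1 A) (opposite_gallery r)"
    and "crossings A (opposite_gallery r) = rev (crossings A r)"
proof -
  have ch: "set r \<subseteq> chambers A" "r \<noteq> []" using r by (auto simp: is_walk_def)
  show "is_walk (chambers A) (adj1 A) (opposite_gallery r)"
    unfolding is_walk_def
  proof (intro conjI allI impI)
    show "opposite_gallery r \<noteq> []" using ch by (simp add: opposite_gallery_def)
    show "set (opposite_gallery r) \<subseteq> chambers A"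
      using ch chambers_uminus(1) by (auto simp: opposite_gallery_def)
    fix i assume "Suc i < length (opposite_gallery r)"
    then show "adj1 A (opposite_gallery r ! i) (opposite_gallery r ! Suc i)"
      using L1sep_opposite_gallery_step[OF ch(1)] is_walk_nth[OF r, of "length r - Suc (Suc i)"]
      by (simp add: adj1_def Suc_diff_Suc)
  qed
  show "crossings A (opposite_gallery r) = rev (crossings A r)"
  proof (rule nth_equalityI)
    fix i assume "i < length (crossings A (opposite_gallery r))"
    then have i: "Suc i < length r" by (simp add: length_crossings)
    then show "crossings A (opposite_gallery r) ! i = rev (crossings A r) ! i"
      using L1sep_opposite_gallery_step[OF ch(1) i] nth_crossings[of i "opposite_gallery r"]
        nth_crossings[of "length r - Suc (Suc i)" r]
      by (simp add: rev_nth length_crossings Suc_diff_Suc)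
  qed (simp add: length_crossings)
qed

lemma opposite_gallery_min_galleries:
  assumes "r \<in> min_galleries A c0"
  shows "opposite_gallery r \<in> min_galleries A c0"
proof -
  have r: "is_walk (chambers A) (adj1 A) r" "hd r = c0" "last r = uminus ` c0" "r \<noteq> []"
    using assms unfolding min_galleries_def by (auto simp: is_walk_def)
  have "hd (opposite_gallery r) = c0" "last (opposite_gallery r) = uminus ` c0"
    using r by (simp_all add: opposite_gallery_def hd_rev last_rev hd_map last_map image_image)
  then show ?thesis
    using assms opposite_gallery_walk(1)[OF r(1)] unfolding min_galleries_def by simp
qed

lemma two_le_card_hyperplanes_containing:
  assumes "X \<in> Lcodim A 2"
  shows "2 \<le> card {H\<in>A. X \<subseteq> H}"
proof (rule ccontr)
  assume "\<not> 2 \<le> card {H\<in>A. X \<subseteq> H}"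
  obtain S where S: "S \<subseteq> A" "S \<noteq> {}" "X = \<Inter>S" "dim X + 2 = DIM('a)"
    using assms unfolding Lcodim_def by auto
  have "S \<subseteq> {H\<in>A. X \<subseteq> H}" using S by auto
  then have "card S \<le> 1"
    using card_mono[of "{H\<in>A. X \<subseteq> H}" S] finite_arrangement \<open>\<not> 2 \<le> _\<close> by auto
  moreover have "finite S" using S(1) finite_arrangement finite_subset by blast
  ultimately obtain H where "S = {H}" using S(2)
    by (metis card_0_eq card_1_singletonE le_eq_less_or_eq less_one)
  then show False using S hyperplane_subspace[of H] by auto
qed

lemma L2sep_opposite_gallery:
  assumes r: "r \<in> min_galleries A c0"
  shows "L2sep A r (opposite_gallery r) = Lcodim A 2"
proof (intro set_eqI iffI)
  fix X assume X: "X \<in> Lcodim A 2"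
  have r_walk: "is_walk (chambers A) (adj1 A) r" using r unfolding min_galleries_def by auto
  define ys where "ys = filter (\<lambda>H. X \<subseteq> H) (crossings A r)"
  have "distinct ys" "set ys = {H\<in>A. X \<subseteq> H}"
    using min_galleries_crossings[OF r] unfolding ys_def by auto
  then have "2 \<le> length ys"
    using two_le_card_hyperplanes_containing[OF X] by (metis distinct_card)
  then have "rev ys \<noteq> ys" using rev_neq_if_distinct \<open>distinct ys\<close> by blast
  moreover have "filter (\<lambda>H. X \<subseteq> H) (crossings A (opposite_gallery r)) = rev ys"
    unfolding ys_def opposite_gallery_walk(2)[OF r_walk] by (simp add: rev_filter)
  ultimately show "X \<in> L2sep A r (opposite_gallery r)"
    unfolding L2sep_def using X ys_def by auto
qed (simp add: L2sep_def)

lemma card_L2sep_le_gdist: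
  "enat (card (L2sep A r r')) \<le> gdist (min_galleries A c0) (adj2 A) r r'"
proof (rule card_le_gdist)
  show "finite (L2sep A a b)" for a b
    using finite_subset[of _ "Inter ` Pow A"] finite_arrangement
    by (auto simp: L2sep_def Lcodim_def)
qed (auto simp: L2sep_def adj2_def)

lemma gdiameter_min_galleries:
  assumes "c0 \<in> chambers A"
  shows "enat (card (Lcodim A 2)) \<le> gdiameter (min_galleries A c0) (adj2 A)"
proof -
  obtain r where r: "r \<in> min_galleries A c0" using min_galleries_nonempty[OF assms] by blast
  then have "enat (card (Lcodim A 2)) = enat (card (L2sep A r (opposite_gallery r)))"
    by (simp add: L2sep_opposite_gallery)
  also have "\<dots> \<le> gdist (min_galleries A c0) (adj2 A) r (opposite_gallery r)"
    by (rule card_L2sep_le_gdist)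
  also have "\<dots> \<le> gdiameter (min_galleries A c0) (adj2 A)"
    using r opposite_gallery_min_galleries[OF r] by (rule gdist_le_gdiameter)
  finally show ?thesis .
qed

end

theorem corollary3p13:
  fixes A :: "'a::euclidean_space set set"
  assumes "central_essential_arrangement A"
  shows "gdiameter (chambers A) (adj1 A) = enat (card A)
    \<and> (\<forall>c0 \<in> chambers A.
         gdiameter (min_galleries A c0) (adj2 A) \<ge> enat (card (Lcodim A 2)))"
proof -
  interpret central_arrangement A
    using assms by unfold_locales (auto simp: central_essential_arrangement_def)
  show ?thesis using gdiameter_chambers gdiameter_min_galleries by blast
qed

end
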